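(* Suppose A1–A4 hold and let $\{x_k\}$ be generated by Algorithm 1. Let $\epsilon>0$ and let $T_0(\epsilon)$ be a nonnegative integer such that $\frac{1}{T}\sum_{k=0}^{T-1}\nu_k\le \frac{\kappa_c\epsilon^2}{2}$ for every integer $T\ge T_0(\epsilon)$ (such an integer exists by A4). If $T$ is a positive integer with $$T\ge\max\left\{T_0(\epsilon),\ \frac{2(f(x_0)-f_{low})}{\kappa_c\epsilon^2}\right\},$$ then $\min_{k=0,\dots,T-1}\|\nabla f(x_k)\|\le\epsilon$.
   Context: Let $(X,\langle\cdot,\cdot\rangle)$ be a real Hilbert space with induced norm $\|\cdot\|$, and $f:X\to\mathbb{R}$ Fréchet differentiable with gradient $\nabla f$. Algorithm 1 (general non-monotone descent algorithm): parameters $x_0\in X$, $\alpha_0>0$, $\beta,\rho\in(0,1)$. For $k=0,1,2,\dots$: choose $d_k\in X$ with $\langle\nabla f(x_k),d_k\rangle<0$; then for $l=0,1,2,\dots$ choose a number $\nu_{k,l}\ge 0$ and test $$f(x_k+\alpha_k\beta^l d_k)\le f(x_k)+\rho\alpha_k\beta^l\langle\nabla f(x_k),d_k\rangle+\nu_{k,l};$$ let $l_k$ be the first $l$ for which this holds, set $\nu_k:=\nu_{k,l_k}$, $x_{k+1}=x_k+\alpha_k\beta^{l_k}d_k$ and $\alpha_{k+1}=\alpha_k\beta^{l_k-1}$. It is assumed the algorithm generates infinite sequences (all $l_k$ finite). Assumptions: A1: $\nabla f$ is Lipschitz continuous with constant $L>0$. A2: there is $f_{low}\in\mathbb{R}$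 with $f(x)\ge f_{low}$ for all $x\in X$. A3: there are constants $c_1,c_2>0$ with $\langle\nabla f(x_k),d_k\rangle\le -c_1\|\nabla f(x_k)\|^2$ and $\|d_k\|\le c_2\|\nabla f(x_k)\|$ for all $k$. A4: $\lim_{T\to\infty}\frac1T\sum_{k=0}^{T-1}\nu_k=0$. Constant: $\kappa_c=\min\left\{\rho\beta\alpha_0c_1,\ \frac{2\beta\rho(1-\rho)c_1^2}{Lc_2^2}\right\}$. *)

theory Defs
  imports "HOL-Analysis.Analysis"
begin

definition nm_test :: "('a::real_inner \<Rightarrow> real) \<Rightarrow> ('a \<Rightarrow> 'a) \<Rightarrow> 'a \<Rightarrow> real \<Rightarrow> 'a
    \<Rightarrow> real \<Rightarrow> real \<Rightarrow> nat \<Rightarrow> real \<Rightarrow> bool" where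
  "nm_test f grad xk ak dk \<beta> \<rho> j nu \<longleftrightarrow>
     f (xk + (ak * \<beta> ^ j) *\<^sub>R dk) \<le> f xk + \<rho> * ak * \<beta> ^ j * inner (grad xk) dk + nu"

text \<open>(x, alpha, d, nu, l) are infinite sequences generated by Algorithm 1:
  nu k j is the number chosen at trial j of iteration k, l k is the first accepted trial.\<close>
definition algorithm1 ::
  "('a::real_inner \<Rightarrow> real) \<Rightarrow> ('a \<Rightarrow> 'a) \<Rightarrow> 'a \<Rightarrow> real \<Rightarrow> real \<Rightarrow> real
   \<Rightarrow> (nat \<Rightarrow> 'a) \<Rightarrow> (nat \<Rightarrow> real) \<Rightarrow> (nat \<Rightarrow> 'a) \<Rightarrow> (nat \<Rightarrow> nat \<Rightarrow> real) \<Rightarrow> (nat \<Rightarrow> nat) \<Rightarrow> bool"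
where
  "algorithm1 f grad x0 \<alpha>0 \<beta> \<rho> x \<alpha> d \<nu> l \<longleftrightarrow>
     \<alpha>0 > 0 \<and> 0 < \<beta> \<and> \<beta> < 1 \<and> 0 < \<rho> \<and> \<rho> < 1 \<and>
     x 0 = x0 \<and> \<alpha> 0 = \<alpha>0 \<and>
     (\<forall>k. inner (grad (x k)) (d k) < 0) \<and>
     (\<forall>k j. \<nu> k j \<ge> 0) \<and>
     (\<forall>k. nm_test f grad (x k) (\<alpha> k) (d k) \<beta> \<rho> (l k) (\<nu> k (l k))) \<and>
     (\<forall>k j. j < l k \<longrightarrow> \<not> nm_test f grad (x k) (\<alpha> k) (d k) \<beta> \<rho> j (\<nu> k j)) \<and>
     (\<forall>k. x (Suc k) = x k + (\<alpha> k * \<beta> ^ l k) *\<^sub>R d k) \<and>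
     (\<forall>k. \<alpha> (Suc k) = \<alpha> k * \<beta> powi (int (l k) - 1))"

definition kappa_c :: "real \<Rightarrow> real \<Rightarrow> real \<Rightarrow> real \<Rightarrow> real \<Rightarrow> real \<Rightarrow> real" where
  "kappa_c \<rho> \<beta> \<alpha>0 c1 c2 L =
     min (\<rho> * \<beta> * \<alpha>0 * c1) (2 * \<beta> * \<rho> * (1 - \<rho>) * c1\<^sup>2 / (L * c2\<^sup>2))"

end

theory Submission imports Defs begin

text \<open>Every accepted step length \<open>t\<^sub>k = \<alpha>\<^sub>k \<beta>^l\<^sub>k\<close> is at least \<open>\<beta> min \<alpha>\<^sub>0 m\<close> with
  \<open>m = 2(1 - \<rho>) c\<^sub>1 / (L c\<^sub>2\<^sup>2)\<close>. If \<open>l\<^sub>k > 0\<close>, the rejected trial \<open>t\<^sub>k / \<beta>\<close> violates the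
  Armijo test even with slack \<open>\<nu> \<ge> 0\<close>, which by the descent lemma for an \<open>L\<close>-Lipschitz gradient
  forces \<open>t\<^sub>k / \<beta> > m\<close>; if \<open>l\<^sub>k = 0\<close>, then \<open>t\<^sub>k = \<alpha>\<^sub>k\<close>, and \<open>\<alpha>\<^sub>k\<^sub>+\<^sub>1 = t\<^sub>k / \<beta>\<close> keeps
  \<open>\<alpha>\<^sub>k \<ge> min \<alpha>\<^sub>0 m\<close> by induction. So each iteration decreases \<open>f\<close> by at least
  \<open>\<kappa>\<^sub>c \<parallel>\<nabla>f(x\<^sub>k)\<parallel>\<^sup>2\<close> up to the slack \<open>\<nu>\<^sub>k\<close>; summing over \<open>T\<close> iterations and using
  \<open>f \<ge> f\<^sub>l\<^sub>o\<^sub>w\<close> bounds the mean of \<open>\<parallel>\<nabla>f(x\<^sub>k)\<parallel>\<^sup>2\<close> by \<open>\<epsilon>\<^sup>2\<close>.\<close>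

lemma descent_lemma:
  fixes f :: "'a::real_inner \<Rightarrow> real"
  assumes deriv: "\<And>y. (f has_derivative (\<lambda>h. inner (grad y) h)) (at y)"
    and lip: "\<And>y z. norm (grad y - grad z) \<le> L * norm (y - z)"
    and s: "s \<ge> 0"
  shows "f (x + s *\<^sub>R d) \<le> f x + s * inner (grad x) d + L * s\<^sup>2 * (norm d)\<^sup>2 / 2"
proof -
  define \<phi> where "\<phi> t = f (x + t *\<^sub>R d) - t * inner (grad x) d - L * t\<^sup>2 * (norm d)\<^sup>2 / 2" for t
  have f_line: "((\<lambda>t. f (x + t *\<^sub>R d)) has_real_derivative inner (grad (x + t *\<^sub>R d)) d) (at t)" for t
  proof -
    have "((\<lambda>t. x + t *\<^sub>R d) has_derivative (\<lambda>h. h *\<^sub>R d)) (at t)"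
      by (auto intro!: derivative_eq_intros)
    from diff_chain_at[OF this deriv]
    have "((\<lambda>t. f (x + t *\<^sub>R d)) has_derivative (\<lambda>h. inner (grad (x + t *\<^sub>R d)) d * h)) (at t)"
      by (simp add: o_def mult.commute)
    then show ?thesis
      by (simp add: has_field_derivative_def)
  qed
  have \<phi>_deriv: "(\<phi> has_real_derivative
      inner (grad (x + t *\<^sub>R d)) d - inner (grad x) d - L * t * (norm d)\<^sup>2) (at t)" for t
    unfolding \<phi>_def by (rule derivative_eq_intros f_line refl | simp)+
  have "\<phi> s \<le> \<phi> 0"
  proof (rule DERIV_nonpos_imp_nonincreasing[OF s])
    fix t assume t: "0 \<le> t" "t \<le> s"
    have "inner (grad (x + t *\<^sub>R d)) d - inner (grad x) d = inner (grad (x + t *\<^sub>R d) - grad x) d"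
      by (simp add: inner_diff_left)
    also have "\<dots> \<le> norm (grad (x + t *\<^sub>R d) - grad x) * norm d"
      by (rule norm_cauchy_schwarz)
    also have "\<dots> \<le> L * norm (t *\<^sub>R d) * norm d"
      using lip[of "x + t *\<^sub>R d" x] by (intro mult_right_mono) auto
    also have "\<dots> = L * t * (norm d)\<^sup>2"
      using t by (simp add: power2_eq_square)
    finally show "\<exists>y. (\<phi> has_real_derivative y) (at t) \<and> y \<le> 0"
      using \<phi>_deriv by (intro exI[of _ "inner (grad (x + t *\<^sub>R d)) d - inner (grad x) d - L * t * (norm d)\<^sup>2"]) auto
  qed
  then show ?thesis
    unfolding \<phi>_def by simp
qed

lemma armijo_failure_imp_step_lower_bound:
  fixes f :: "'a::real_inner \<Rightarrow> real"
  assumes deriv: "\<And>y. (f has_derivative (\<lambda>h. inner (grad y) h)) (at y)"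
    and lip: "\<And>y z. norm (grad y - grad z) \<le> L * norm (y - z)"
    and L: "L > 0" and c2: "c2 > 0" and \<rho>: "\<rho> < 1" and s: "s > 0"
    and descent_dir: "inner (grad x) d \<le> - c1 * (norm (grad x))\<^sup>2"
    and bounded_dir: "norm d \<le> c2 * norm (grad x)"
    and grad_nonzero: "grad x \<noteq> 0"
    and fails: "f (x + s *\<^sub>R d) > f x + \<rho> * s * inner (grad x) d"
  shows "s > 2 * (1 - \<rho>) * c1 / (L * c2\<^sup>2)"
proof -
  define g where "g = norm (grad x)"
  have g: "g > 0"
    using grad_nonzero unfolding g_def by simp
  have d_sq: "(norm d)\<^sup>2 \<le> c2\<^sup>2 * g\<^sup>2"
    using bounded_dir unfolding g_def by (metis norm_ge_zero power_mono power_mult_distrib)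
  have "(1 - \<rho>) * s * (c1 * g\<^sup>2) \<le> (1 - \<rho>) * s * (- inner (grad x) d)"
    using descent_dir \<rho> s unfolding g_def by (intro mult_left_mono) auto
  also have "\<dots> < L * s\<^sup>2 * (norm d)\<^sup>2 / 2"
    using fails descent_lemma[OF deriv lip, of s x d] s by (simp add: algebra_simps)
  also have "\<dots> \<le> L * s\<^sup>2 * (c2\<^sup>2 * g\<^sup>2) / 2"
    using d_sq L by (intro divide_right_mono mult_left_mono) auto
  finally have "((1 - \<rho>) * c1) * (s * g\<^sup>2) < (L * s * c2\<^sup>2 / 2) * (s * g\<^sup>2)"
    by (simp add: power2_eq_square algebra_simps)
  then have "(1 - \<rho>) * c1 < L * s * c2\<^sup>2 / 2"
    using s g by (simp add: mult_less_cancel_right mult_ac)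
  then show ?thesis
    using L c2 by (simp add: field_simps)
qed

lemma Min_le_of_sum_squares_le:
  fixes g :: "nat \<Rightarrow> real"
  assumes "T > 0" "\<epsilon> \<ge> 0" "(\<Sum>k<T. (g k)\<^sup>2) \<le> real T * \<epsilon>\<^sup>2"
  shows "Min (g ` {..<T}) \<le> \<epsilon>"
proof (rule ccontr)
  assume "\<not> ?thesis"
  then have "\<epsilon> < Min (g ` {..<T})"
    by simp
  then have "\<forall>k<T. \<epsilon> < g k"
    using \<open>T > 0\<close> by (subst (asm) Min_gr_iff) auto
  then have "(\<Sum>k<T. \<epsilon>\<^sup>2) < (\<Sum>k<T. (g k)\<^sup>2)"
    using assms(1,2) by (intro sum_strict_mono power_strict_mono) auto
  then show False
    using assms(3) by simp
qed

locale algorithm1_run =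
  fixes f :: "'a::real_inner \<Rightarrow> real" and grad :: "'a \<Rightarrow> 'a"
    and x0 :: 'a and \<alpha>0 \<beta> \<rho> L c1 c2 :: real
    and x :: "nat \<Rightarrow> 'a" and \<alpha> :: "nat \<Rightarrow> real" and d :: "nat \<Rightarrow> 'a"
    and \<nu> :: "nat \<Rightarrow> nat \<Rightarrow> real" and l :: "nat \<Rightarrow> nat"
  assumes has_gradient: "\<And>y. (f has_derivative (\<lambda>h. inner (grad y) h)) (at y)"
    and algorithm: "algorithm1 f grad x0 \<alpha>0 \<beta> \<rho> x \<alpha> d \<nu> l"
    and L_pos: "L > 0"
    and grad_lipschitz: "\<And>y z. norm (grad y - grad z) \<le> L * norm (y - z)"
    and c1_pos: "c1 > 0" and c2_pos: "c2 > 0"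
    and descent_dir: "\<And>k. inner (grad (x k)) (d k) \<le> - c1 * (norm (grad (x k)))\<^sup>2"
    and bounded_dir: "\<And>k. norm (d k) \<le> c2 * norm (grad (x k))"
begin

lemma \<alpha>0_pos: "\<alpha>0 > 0" and \<beta>_pos: "\<beta> > 0" and \<beta>_lt_1: "\<beta> < 1"
  and \<rho>_pos: "\<rho> > 0" and \<rho>_lt_1: "\<rho> < 1"
  and x_0: "x 0 = x0" and \<alpha>_0: "\<alpha> 0 = \<alpha>0"
  and inner_grad_dir_neg: "inner (grad (x k)) (d k) < 0"
  and slack_nonneg: "\<nu> k j \<ge> 0"
  and accepted: "nm_test f grad (x k) (\<alpha> k) (d k) \<beta> \<rho> (l k) (\<nu> k (l k))"
  and rejected: "j < l k \<Longrightarrow> \<not> nm_test f grad (x k) (\<alpha> k) (d k) \<beta> \<rho> j (\<nu> k j)"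
  and x_Suc: "x (Suc k) = x k + (\<alpha> k * \<beta> ^ l k) *\<^sub>R d k"
  and \<alpha>_Suc_powi: "\<alpha> (Suc k) = \<alpha> k * \<beta> powi (int (l k) - 1)"
  using algorithm unfolding algorithm1_def by blast+

definition step :: "nat \<Rightarrow> real" where
  "step k = \<alpha> k * \<beta> ^ l k"

definition step_floor :: real where
  "step_floor = 2 * (1 - \<rho>) * c1 / (L * c2\<^sup>2)"

lemma step_floor_pos: "step_floor > 0"
  unfolding step_floor_def using \<rho>_lt_1 c1_pos c2_pos L_pos by simp

lemma \<alpha>_Suc: "\<alpha> (Suc k) = step k / \<beta>"
  using \<beta>_pos by (simp add: \<alpha>_Suc_powi step_def power_int_diff power_int_of_nat)

lemma \<alpha>_pos: "\<alpha> k > 0"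
  by (induction k) (use \<alpha>0_pos \<alpha>_0 \<beta>_pos in \<open>auto simp: \<alpha>_Suc step_def\<close>)

lemma step_after_backtracking:
  assumes "l k > 0"
  shows "step k > \<beta> * step_floor"
proof -
  define s where "s = \<alpha> k * \<beta> ^ (l k - 1)"
  have "step k = \<beta> * s"
    unfolding step_def s_def using assms by (metis Suc_diff_1 mult.left_commute power_Suc)
  moreover have "s > step_floor"
    unfolding step_floor_def
  proof (rule armijo_failure_imp_step_lower_bound
      [OF has_gradient grad_lipschitz L_pos c2_pos \<rho>_lt_1 _ descent_dir bounded_dir])
    show "s > 0"
      unfolding s_def using \<alpha>_pos \<beta>_pos by simp
    show "grad (x k) \<noteq> 0"
      using inner_grad_dir_neg[of k] by auto
    have "\<not> nm_test f grad (x k) (\<alpha> k) (d k) \<beta> \<rho> (l k - 1) (\<nu> k (l k - 1))"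
      using rejected assms by simp
    then show "f (x k + s *\<^sub>R d k) > f (x k) + \<rho> * s * inner (grad (x k)) (d k)"
      unfolding nm_test_def s_def using slack_nonneg[of k "l k - 1"] by (simp add: mult.assoc)
  qed
  ultimately show ?thesis
    using \<beta>_pos by simp
qed

lemma \<alpha>_lower_bound: "\<alpha> k \<ge> min \<alpha>0 step_floor"
proof (induction k)
  case 0
  then show ?case using \<alpha>_0 by simp
next
  case (Suc k)
  show ?case
  proof (cases "l k = 0")
    case True
    then have "\<alpha> (Suc k) = \<alpha> k / \<beta>"
      by (simp add: \<alpha>_Suc step_def)
    moreover have "\<alpha> k \<le> \<alpha> k / \<beta>"
      using \<alpha>_pos[of k] \<beta>_pos \<beta>_lt_1 by (simp add: field_simps)
    ultimately show ?thesis
      using Suc.IH by simp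
  next
    case False
    then have "step k / \<beta> > step_floor"
      using step_after_backtracking[of k] \<beta>_pos by (simp add: field_simps)
    then show ?thesis
      by (simp add: \<alpha>_Suc)
  qed
qed

lemma step_lower_bound: "step k \<ge> \<beta> * min \<alpha>0 step_floor"
proof (cases "l k = 0")
  case True
  have "\<beta> * min \<alpha>0 step_floor \<le> min \<alpha>0 step_floor"
    using \<beta>_pos \<beta>_lt_1 \<alpha>0_pos step_floor_pos by (intro mult_left_le_one_le) auto
  moreover have "step k = \<alpha> k"
    using True by (simp add: step_def)
  ultimately show ?thesis
    using \<alpha>_lower_bound[of k] by linarith
next
  case False
  have "\<beta> * min \<alpha>0 step_floor \<le> \<beta> * step_floor"
    using \<beta>_pos by (intro mult_left_mono) auto
  with False step_after_backtracking[of k] show ?thesis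
    by linarith
qed

lemma kappa_c_eq: "kappa_c \<rho> \<beta> \<alpha>0 c1 c2 L = \<rho> * c1 * (\<beta> * min \<alpha>0 step_floor)"
proof -
  have "\<rho> * c1 * (\<beta> * min \<alpha>0 step_floor) = min (\<rho> * c1 * \<beta> * \<alpha>0) (\<rho> * c1 * \<beta> * step_floor)"
    using \<rho>_pos c1_pos \<beta>_pos by (simp add: min_mult_distrib_left mult.assoc)
  then show ?thesis
    unfolding kappa_c_def step_floor_def using L_pos c2_pos
    by (simp add: power2_eq_square algebra_simps)
qed

lemma kappa_c_pos: "kappa_c \<rho> \<beta> \<alpha>0 c1 c2 L > 0"
  unfolding kappa_c_eq using \<rho>_pos c1_pos \<beta>_pos \<alpha>0_pos step_floor_pos by simp

lemma sufficient_decrease: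
  "f (x (Suc k)) \<le> f (x k) - kappa_c \<rho> \<beta> \<alpha>0 c1 c2 L * (norm (grad (x k)))\<^sup>2 + \<nu> k (l k)"
proof -
  have "f (x (Suc k)) \<le> f (x k) + \<rho> * step k * inner (grad (x k)) (d k) + \<nu> k (l k)"
    using accepted[of k] unfolding nm_test_def x_Suc step_def by (simp add: mult.assoc)
  also have "\<rho> * step k * inner (grad (x k)) (d k) \<le> \<rho> * step k * (- c1 * (norm (grad (x k)))\<^sup>2)"
    using descent_dir[of k] \<rho>_pos \<alpha>_pos[of k] \<beta>_pos
    by (intro mult_left_mono) (auto simp: step_def)
  also have "\<dots> \<le> - kappa_c \<rho> \<beta> \<alpha>0 c1 c2 L * (norm (grad (x k)))\<^sup>2"
  proof -
    have "kappa_c \<rho> \<beta> \<alpha>0 c1 c2 L \<le> \<rho> * c1 * step k"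
      unfolding kappa_c_eq using step_lower_bound[of k] \<rho>_pos c1_pos by simp
    then have "kappa_c \<rho> \<beta> \<alpha>0 c1 c2 L * (norm (grad (x k)))\<^sup>2
        \<le> \<rho> * c1 * step k * (norm (grad (x k)))\<^sup>2"
      by (rule mult_right_mono) simp
    then show ?thesis
      by (simp add: algebra_simps)
  qed
  finally show ?thesis
    by simp
qed

lemma telescoped_decrease:
  "f (x n) \<le> f x0 - kappa_c \<rho> \<beta> \<alpha>0 c1 c2 L * (\<Sum>k<n. (norm (grad (x k)))\<^sup>2) + (\<Sum>k<n. \<nu> k (l k))"
proof (induction n)
  case 0
  then show ?case using x_0 by simp
next
  case (Suc n)
  then show ?case
    using sufficient_decrease[of n] by (simp add: algebra_simps)
qed

end

theorem theorem2:
  fixes f :: "'a::{real_inner, complete_space} \<Rightarrow> real"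
    and grad :: "'a \<Rightarrow> 'a"
    and x0 :: 'a and \<alpha>0 \<beta> \<rho> L f_low c1 c2 \<epsilon> :: real
    and x :: "nat \<Rightarrow> 'a" and \<alpha> :: "nat \<Rightarrow> real" and d :: "nat \<Rightarrow> 'a"
    and \<nu> :: "nat \<Rightarrow> nat \<Rightarrow> real" and l :: "nat \<Rightarrow> nat"
    and T0 T :: nat
  assumes deriv: "\<And>y. (f has_derivative (\<lambda>h. inner (grad y) h)) (at y)"
    and alg: "algorithm1 f grad x0 \<alpha>0 \<beta> \<rho> x \<alpha> d \<nu> l"
    and A1: "L > 0" "\<And>y z. norm (grad y - grad z) \<le> L * norm (y - z)"
    and A2: "\<And>y. f y \<ge> f_low"
    and A3: "c1 > 0" "c2 > 0"
      "\<And>k. inner (grad (x k)) (d k) \<le> - c1 * (norm (grad (x k)))\<^sup>2"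
      "\<And>k. norm (d k) \<le> c2 * norm (grad (x k))"
    and A4: "(\<lambda>T. (\<Sum>k<T. \<nu> k (l k)) / real T) \<longlonglongrightarrow> 0"
    and eps: "\<epsilon> > 0"
    and T0: "\<And>T'. T' \<ge> T0 \<Longrightarrow> (\<Sum>k<T'. \<nu> k (l k)) / real T'
                 \<le> kappa_c \<rho> \<beta> \<alpha>0 c1 c2 L * \<epsilon>\<^sup>2 / 2"
    and Tpos: "T > 0"
    and Tbig: "real T \<ge> max (real T0)
                 (2 * (f x0 - f_low) / (kappa_c \<rho> \<beta> \<alpha>0 c1 c2 L * \<epsilon>\<^sup>2))"
  shows "Min ((\<lambda>k. norm (grad (x k))) ` {..<T}) \<le> \<epsilon>"
proof -
  interpret algorithm1_run f grad x0 \<alpha>0 \<beta> \<rho> L c1 c2 x \<alpha> d \<nu> l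
    using deriv alg A1 A3 by unfold_locales
  define \<kappa> where "\<kappa> = kappa_c \<rho> \<beta> \<alpha>0 c1 c2 L"
  have \<kappa>: "\<kappa> > 0"
    unfolding \<kappa>_def by (rule kappa_c_pos)
  have slack: "(\<Sum>k<T. \<nu> k (l k)) \<le> real T * (\<kappa> * \<epsilon>\<^sup>2) / 2"
    using T0[of T] Tbig Tpos unfolding \<kappa>_def by (simp add: field_simps)
  have gap: "f x0 - f_low \<le> real T * (\<kappa> * \<epsilon>\<^sup>2) / 2"
    using Tbig \<kappa> eps unfolding \<kappa>_def[symmetric] by (simp add: field_simps)
  have "\<kappa> * (\<Sum>k<T. (norm (grad (x k)))\<^sup>2) \<le> (f x0 - f_low) + (\<Sum>k<T. \<nu> k (l k))"
    using A2[of "x T"] telescoped_decrease[of T] unfolding \<kappa>_def by linarith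
  also have "\<dots> \<le> real T * (\<kappa> * \<epsilon>\<^sup>2)"
    using slack gap by linarith
  finally have "(\<Sum>k<T. (norm (grad (x k)))\<^sup>2) \<le> real T * \<epsilon>\<^sup>2"
    using \<kappa> by (simp add: mult.left_commute)
  then show ?thesis
    using Min_le_of_sum_squares_le[OF Tpos] eps by simp
qed

end
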